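(* Let $s\in S$, $a\in A(s)$, $i\in P$ and $j\in\mathbb N_0$. If $\sum_{p=0}^{i'}\Delta_j(s,a,p)\le 0$ for all $i'\le i$, then $\sum_{p=0}^{i'}\Delta_{j'}(s,a,p)\le 0$ for all $j'\ge j$ and all $i'\le i$.
   Context: Let $(S,A,T,P,R,\Lambda)$ be an asymmetrically-discounted MDP: $S$ finite states, $A(s)$ the nonempty set of actions available at $s$, $p(s'\mid s,a)$ transition probabilities, principals $P=\{0,\dots,n-1\}$, rewards $R:S\times A\times P\to\mathbb Q$, and rational discount factors $\lambda_i\in(0,1)$ with $\lambda_0>\lambda_1>\dots>\lambda_{n-1}$. Define MDPs $\mathcal M_0=\mathcal M$ and, for $k=0,\dots,n-1$, let $V_k:S\to\mathbb R$ be the optimal discounted value function for principal $k$ (reward $R(\cdot,\cdot,k)$, discount $\lambda_k$) in $\mathcal M_k$, and let $\mathcal M_{k+1}$ be $\mathcal M_k$ restricted to actions used by some strategy optimal for principal $k$ in $\mathcal M_k$. For $s\in S$, $a\in A(s)$ and $i\in P$ define $\Delta_0(s,a,i)=R(s,a,i)+\lambda_i\sum_{s'\in S}p(s'\mid s,a)V_i(s')-V_i(s)$, and for $j\in\mathbb N_0$ define $\Delta_j(s,a,i)=\lambda_i^j\,\Delta_0(s,a,i)$. *)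

theory Defs
  imports "HOL-Probability.Probability"
begin

type_synonym ('s, 'a) strategy = "('s \<times> 'a) list \<Rightarrow> 's \<Rightarrow> 'a pmf"

definition strategy_in :: "('s \<Rightarrow> 'a set) \<Rightarrow> ('s, 'a) strategy \<Rightarrow> bool" where
  "strategy_in A \<sigma> \<longleftrightarrow> (\<forall>h s. set_pmf (\<sigma> h s) \<subseteq> A s)"

fun val_n :: "('s::finite \<Rightarrow> 'a set) \<Rightarrow> ('s \<Rightarrow> 'a \<Rightarrow> 's \<Rightarrow> real) \<Rightarrow>
    ('s \<Rightarrow> 'a \<Rightarrow> real) \<Rightarrow> real \<Rightarrow> ('s, 'a) strategy \<Rightarrow> nat \<Rightarrow> ('s \<times> 'a) list \<Rightarrow> 's \<Rightarrow> real" where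
  "val_n A p r l \<sigma> 0 h s = 0"
| "val_n A p r l \<sigma> (Suc n) h s =
     (\<Sum>a\<in>A s. pmf (\<sigma> h s) a *
        (r s a + l * (\<Sum>s'\<in>UNIV. p s a s' * val_n A p r l \<sigma> n (h @ [(s, a)]) s')))"

definition disc_value :: "('s::finite \<Rightarrow> 'a set) \<Rightarrow> ('s \<Rightarrow> 'a \<Rightarrow> 's \<Rightarrow> real) \<Rightarrow>
    ('s \<Rightarrow> 'a \<Rightarrow> real) \<Rightarrow> real \<Rightarrow> ('s, 'a) strategy \<Rightarrow> 's \<Rightarrow> real" where
  "disc_value A p r l \<sigma> s = lim (\<lambda>n. val_n A p r l \<sigma> n [] s)"

definition opt_value :: "('s::finite \<Rightarrow> 'a set) \<Rightarrow> ('s \<Rightarrow> 'a \<Rightarrow> 's \<Rightarrow> real) \<Rightarrow>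
    ('s \<Rightarrow> 'a \<Rightarrow> real) \<Rightarrow> real \<Rightarrow> 's \<Rightarrow> real" where
  "opt_value A p r l s = (SUP \<sigma>\<in>{\<sigma>. strategy_in A \<sigma>}. disc_value A p r l \<sigma> s)"

definition optimal_strategy :: "('s::finite \<Rightarrow> 'a set) \<Rightarrow> ('s \<Rightarrow> 'a \<Rightarrow> 's \<Rightarrow> real) \<Rightarrow>
    ('s \<Rightarrow> 'a \<Rightarrow> real) \<Rightarrow> real \<Rightarrow> ('s, 'a) strategy \<Rightarrow> bool" where
  "optimal_strategy A p r l \<sigma> \<longleftrightarrow>
     strategy_in A \<sigma> \<and> (\<forall>s. disc_value A p r l \<sigma> s = opt_value A p r l s)"

text \<open>Action sets of the MDPs M_k: M_0 = M, M_(k+1) = M_k restricted to the actions used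
  by some strategy optimal for principal k in M_k.\<close>
fun acts :: "('s::finite \<Rightarrow> 'a set) \<Rightarrow> ('s \<Rightarrow> 'a \<Rightarrow> 's \<Rightarrow> real) \<Rightarrow>
    ('s \<Rightarrow> 'a \<Rightarrow> nat \<Rightarrow> real) \<Rightarrow> (nat \<Rightarrow> real) \<Rightarrow> nat \<Rightarrow> 's \<Rightarrow> 'a set" where
  "acts A p R lam 0 = A"
| "acts A p R lam (Suc k) = (\<lambda>s. {a \<in> acts A p R lam k s.
      \<exists>\<sigma>. optimal_strategy (acts A p R lam k) p (\<lambda>s a. R s a k) (lam k) \<sigma>
          \<and> a \<in> set_pmf (\<sigma> [] s)})"

definition Vopt :: "('s::finite \<Rightarrow> 'a set) \<Rightarrow> ('s \<Rightarrow> 'a \<Rightarrow> 's \<Rightarrow> real) \<Rightarrow>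
    ('s \<Rightarrow> 'a \<Rightarrow> nat \<Rightarrow> real) \<Rightarrow> (nat \<Rightarrow> real) \<Rightarrow> nat \<Rightarrow> 's \<Rightarrow> real" where
  "Vopt A p R lam k = opt_value (acts A p R lam k) p (\<lambda>s a. R s a k) (lam k)"

definition Delta0 :: "('s::finite \<Rightarrow> 'a set) \<Rightarrow> ('s \<Rightarrow> 'a \<Rightarrow> 's \<Rightarrow> real) \<Rightarrow>
    ('s \<Rightarrow> 'a \<Rightarrow> nat \<Rightarrow> real) \<Rightarrow> (nat \<Rightarrow> real) \<Rightarrow> 's \<Rightarrow> 'a \<Rightarrow> nat \<Rightarrow> real" where
  "Delta0 A p R lam s a i =
     R s a i + lam i * (\<Sum>s'\<in>UNIV. p s a s' * Vopt A p R lam i s') - Vopt A p R lam i s"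

definition Delta :: "('s::finite \<Rightarrow> 'a set) \<Rightarrow> ('s \<Rightarrow> 'a \<Rightarrow> 's \<Rightarrow> real) \<Rightarrow>
    ('s \<Rightarrow> 'a \<Rightarrow> nat \<Rightarrow> real) \<Rightarrow> (nat \<Rightarrow> real) \<Rightarrow> nat \<Rightarrow> 's \<Rightarrow> 'a \<Rightarrow> nat \<Rightarrow> real" where
  "Delta A p R lam j s a i = lam i ^ j * Delta0 A p R lam s a i"

definition ad_mdp :: "('s::finite \<Rightarrow> 'a set) \<Rightarrow> ('s \<Rightarrow> 'a \<Rightarrow> 's \<Rightarrow> real) \<Rightarrow>
    ('s \<Rightarrow> 'a \<Rightarrow> nat \<Rightarrow> real) \<Rightarrow> (nat \<Rightarrow> real) \<Rightarrow> nat \<Rightarrow> bool" where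
  "ad_mdp A p R lam n \<longleftrightarrow>
     (\<forall>s. finite (A s) \<and> A s \<noteq> {}) \<and>
     (\<forall>s. \<forall>a\<in>A s. (\<forall>s'. p s a s' \<ge> 0) \<and> (\<Sum>s'\<in>UNIV. p s a s') = 1) \<and>
     (\<forall>s. \<forall>a\<in>A s. \<forall>i<n. R s a i \<in> \<rat>) \<and>
     (\<forall>i<n. lam i \<in> \<rat> \<and> 0 < lam i \<and> lam i < 1) \<and>
     (\<forall>i k. i < k \<longrightarrow> k < n \<longrightarrow> lam k < lam i)"

end

theory Submission
  imports Defs
begin

text \<open>Raising the discount exponent from j to j' multiplies the q-th summand by
  \<open>lam q ^ (j' - j)\<close>. These weights are nonnegative and nonincreasing in q because the
  discount factors decrease, so by Abel summation the weighted sum is bounded by the last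
  weight times the unweighted partial sum, which is nonpositive.\<close>

lemma sum_mult_antimono_weights_le:
  fixes c y :: "nat \<Rightarrow> 'a::linordered_idom"
  assumes "\<And>k. k \<le> m \<Longrightarrow> (\<Sum>q\<le>k. y q) \<le> 0"
    and "\<And>k. k < m \<Longrightarrow> c (Suc k) \<le> c k"
  shows "(\<Sum>q\<le>m. c q * y q) \<le> c m * (\<Sum>q\<le>m. y q)"
  using assms
proof (induction m)
  case 0
  then show ?case by simp
next
  case (Suc m)
  have "(\<Sum>q\<le>m. c q * y q) \<le> c m * (\<Sum>q\<le>m. y q)"
    using Suc by simp
  also have "\<dots> \<le> c (Suc m) * (\<Sum>q\<le>m. y q)"
    using Suc.prems by (simp add: mult_right_mono_neg)
  finally show ?case
    by (simp add: algebra_simps)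
qed

lemma sum_mult_antimono_weights_nonpos:
  fixes c y :: "nat \<Rightarrow> 'a::linordered_idom"
  assumes "\<And>k. k \<le> m \<Longrightarrow> (\<Sum>q\<le>k. y q) \<le> 0"
    and "\<And>k. k < m \<Longrightarrow> c (Suc k) \<le> c k"
    and "0 \<le> c m"
  shows "(\<Sum>q\<le>m. c q * y q) \<le> 0"
proof -
  have "(\<Sum>q\<le>m. c q * y q) \<le> c m * (\<Sum>q\<le>m. y q)"
    using assms(1,2) by (rule sum_mult_antimono_weights_le)
  also have "\<dots> \<le> 0"
    using assms(1)[of m] assms(3) by (simp add: mult_nonneg_nonpos)
  finally show ?thesis .
qed

lemma Delta_add_exponent:
  "Delta A p R lam (j + e) s a q = lam q ^ e * Delta A p R lam j s a q"
  by (simp add: Delta_def power_add)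

lemma ad_mdp_discount_power_antimono:
  assumes "ad_mdp A p R lam n" and "q \<le> k" and "k < n"
  shows "0 \<le> lam k ^ e" and "lam k ^ e \<le> lam q ^ e"
proof -
  have "0 < lam k"
    using assms unfolding ad_mdp_def by auto
  moreover have "lam k \<le> lam q"
    using assms unfolding ad_mdp_def by (cases "q = k") (auto intro: less_imp_le)
  ultimately show "0 \<le> lam k ^ e" and "lam k ^ e \<le> lam q ^ e"
    by (simp_all add: power_mono)
qed

theorem lemma2:
  fixes A :: "'s::finite \<Rightarrow> 'a set"
    and p :: "'s \<Rightarrow> 'a \<Rightarrow> 's \<Rightarrow> real"
    and R :: "'s \<Rightarrow> 'a \<Rightarrow> nat \<Rightarrow> real"
    and lam :: "nat \<Rightarrow> real"
    and n :: nat and s :: 's and a :: 'a and i j :: nat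
  assumes "ad_mdp A p R lam n"
    and "a \<in> A s" and "i < n"
    and "\<forall>i'\<le>i. (\<Sum>q\<le>i'. Delta A p R lam j s a q) \<le> 0"
  shows "\<forall>j'\<ge>j. \<forall>i'\<le>i. (\<Sum>q\<le>i'. Delta A p R lam j' s a q) \<le> 0"
proof (intro allI impI)
  fix j' i' :: nat
  assume "j \<le> j'" and "i' \<le> i"
  then obtain e where j': "j' = j + e"
    using le_Suc_ex by blast
  have "(\<Sum>q\<le>i'. lam q ^ e * Delta A p R lam j s a q) \<le> 0"
  proof (rule sum_mult_antimono_weights_nonpos)
    show "\<And>k. k \<le> i' \<Longrightarrow> (\<Sum>q\<le>k. Delta A p R lam j s a q) \<le> 0"
      using assms(4) \<open>i' \<le> i\<close> by simp
    show "\<And>k. k < i' \<Longrightarrow> lam (Suc k) ^ e \<le> lam k ^ e"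
      using ad_mdp_discount_power_antimono(2)[OF assms(1)] \<open>i' \<le> i\<close> assms(3) by simp
    show "0 \<le> lam i' ^ e"
      using ad_mdp_discount_power_antimono(1)[OF assms(1) order_refl] \<open>i' \<le> i\<close> assms(3) by simp
  qed
  then show "(\<Sum>q\<le>i'. Delta A p R lam j' s a q) \<le> 0"
    by (simp add: j' Delta_add_exponent)
qed

end
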